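(* Let $G_1$ and $G_2$ be finite groups each satisfying: for all $x,y$, $x^2=1$ or $y^2=1$ or $xy=yx$. Suppose that every abelian section of $G_2$ is isomorphic to a section of $G_1$, and that $G_1$ is nonabelian. Then $G_2$ is isomorphic to a section of $G_1$.
   Context: A section of a group is a quotient of one of its subgroups. *)

theory Defs
  imports "HOL-Algebra.Algebra"
begin

definition iso_to_section :: "('b, 'd) monoid_scheme \<Rightarrow> ('a, 'c) monoid_scheme \<Rightarrow> bool" where
  "iso_to_section S G \<longleftrightarrow>
     (\<exists>H N. subgroup H G \<and> normal N (G\<lparr>carrier := H\<rparr>) \<and> S \<cong> (G\<lparr>carrier := H\<rparr>) Mod N)"

definition sq_cond :: "('a, 'c) monoid_scheme \<Rightarrow> bool" where
  "sq_cond G \<longleftrightarrow> (\<forall>x\<in>carrier G. \<forall>y\<in>carrier G.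
      x \<otimes>\<^bsub>G\<^esub> x = \<one>\<^bsub>G\<^esub> \<or> y \<otimes>\<^bsub>G\<^esub> y = \<one>\<^bsub>G\<^esub> \<or> x \<otimes>\<^bsub>G\<^esub> y = y \<otimes>\<^bsub>G\<^esub> x)"

end

theory Submission
  imports Defs
begin

text \<open>
  Under the square condition, a nonabelian group is generalized dihedral: the centralizer \<open>A\<close>
  of the elements of order greater than two is an abelian subgroup of index two, and every
  element outside \<open>A\<close> is an involution inverting \<open>A\<close>. A generalized dihedral group is
  determined up to isomorphism by \<open>A\<close>.

  If \<open>G2\<close> is abelian it is itself an abelian section of \<open>G2\<close>. Otherwise \<open>A2 \<cong> H/N\<close> for a
  section of \<open>G1\<close>. An abelian quotient of a subgroup of \<open>G1\<close> that leaves \<open>A1\<close> has exponent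
  two, while \<open>A2\<close> has an element of order greater than two; hence \<open>H \<subseteq> A1\<close>. Adjoining
  some \<open>t \<notin> A1\<close> gives the subgroup \<open>H \<union> tH\<close>, in which \<open>N\<close> is normal, and \<open>(H \<union> tH)/N\<close>
  is generalized dihedral over \<open>H/N \<cong> A2\<close>, hence isomorphic to \<open>G2\<close>.
\<close>

definition noninvolutions :: "('a, 'b) monoid_scheme \<Rightarrow> 'a set" where
  "noninvolutions G = {x \<in> carrier G. x \<otimes>\<^bsub>G\<^esub> x \<noteq> \<one>\<^bsub>G\<^esub>}"

definition centralizer :: "('a, 'b) monoid_scheme \<Rightarrow> 'a set \<Rightarrow> 'a set" where
  "centralizer G S = {g \<in> carrier G. \<forall>x\<in>S. g \<otimes>\<^bsub>G\<^esub> x = x \<otimes>\<^bsub>G\<^esub> g}"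

context group
begin

lemma subgroup_mult_right_iff:
  assumes "subgroup H G" "a \<in> H" "x \<in> carrier G"
  shows "x \<otimes> a \<in> H \<longleftrightarrow> x \<in> H"
proof
  assume "x \<otimes> a \<in> H"
  then have "(x \<otimes> a) \<otimes> inv a \<in> H"
    using assms(2) subgroup.m_closed[OF assms(1)] subgroup.m_inv_closed[OF assms(1)] by blast
  then show "x \<in> H"
    using subgroup.mem_carrier[OF assms(1,2)] assms(3) by (simp add: m_assoc)
qed (use assms(2) subgroup.m_closed[OF assms(1)] in blast)

lemma mem_subgroup_containing_kernel:
  assumes A: "subgroup A G" and hom: "group_hom G Q f" and kernel: "kernel G Q f \<subseteq> A"
    and x: "x \<in> carrier G" and fx: "f x \<in> f ` A"
  shows "x \<in> A"
proof -
  interpret f: group_hom G Q f by (rule hom)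
  obtain a where a: "a \<in> A" "f x = f a" using fx by blast
  then have "x \<otimes> inv a \<in> kernel G Q f"
    using x subgroup.mem_carrier[OF A a(1)] by (simp add: kernel_def)
  then show "x \<in> A"
    using kernel subgroup_mult_right_iff[OF A subgroup.m_inv_closed[OF A a(1)] x] by blast
qed

lemma subgroup_centralizer:
  assumes "S \<subseteq> carrier G"
  shows "subgroup (centralizer G S) G"
proof (rule subgroupI)
  show "centralizer G S \<subseteq> carrier G" by (auto simp: centralizer_def)
  have "\<one> \<in> centralizer G S" using assms by (auto simp: centralizer_def)
  then show "centralizer G S \<noteq> {}" by blast
next
  fix g assume g: "g \<in> centralizer G S"
  have "inv g \<otimes> x = x \<otimes> inv g" if x: "x \<in> S" for x
  proof -
    have gx: "g \<in> carrier G" "x \<in> carrier G" "g \<otimes> x = x \<otimes> g"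
      using g x assms by (auto simp: centralizer_def)
    have "x \<otimes> inv g = inv g \<otimes> (g \<otimes> x) \<otimes> inv g" using gx(1,2) by (simp add: m_assoc [symmetric])
    also have "\<dots> = inv g \<otimes> (x \<otimes> g) \<otimes> inv g" using gx(3) by simp
    also have "\<dots> = inv g \<otimes> x" using gx(1,2) by (simp add: m_assoc)
    finally show ?thesis by simp
  qed
  then show "inv g \<in> centralizer G S" using g by (simp add: centralizer_def)
next
  fix g h assume g: "g \<in> centralizer G S" and h: "h \<in> centralizer G S"
  have "g \<otimes> h \<otimes> x = x \<otimes> (g \<otimes> h)" if x: "x \<in> S" for x
  proof -
    have ghx: "g \<in> carrier G" "h \<in> carrier G" "x \<in> carrier G"
      "g \<otimes> x = x \<otimes> g" "h \<otimes> x = x \<otimes> h"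
      using g h x assms by (auto simp: centralizer_def)
    have "g \<otimes> h \<otimes> x = g \<otimes> (x \<otimes> h)" using ghx by (simp add: m_assoc)
    also have "\<dots> = (g \<otimes> x) \<otimes> h" using ghx(1-3) by (simp add: m_assoc)
    also have "\<dots> = x \<otimes> (g \<otimes> h)" using ghx by (simp add: m_assoc)
    finally show ?thesis .
  qed
  then show "g \<otimes> h \<in> centralizer G S" using g h by (simp add: centralizer_def)
qed

lemma comm_group_if_squares_one:
  assumes squares: "\<And>x. x \<in> carrier G \<Longrightarrow> x \<otimes> x = \<one>"
  shows "comm_group G"
proof (rule group_comm_groupI)
  have inv_self: "inv x = x" if "x \<in> carrier G" for x
    using squares that inv_equality by blast
  fix x y assume "x \<in> carrier G" "y \<in> carrier G"
  then show "x \<otimes> y = y \<otimes> x"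
    using inv_self[of "x \<otimes> y"] inv_self[of x] inv_self[of y] by (simp add: inv_mult_group)
qed

lemma noninvolutions_iso:
  assumes "group H" "G \<cong> H" "noninvolutions G \<noteq> {}"
  shows "noninvolutions H \<noteq> {}"
proof -
  obtain \<phi> where \<phi>: "\<phi> \<in> iso G H" using assms(2) by (auto simp: is_iso_def)
  interpret \<phi>: group_hom G H \<phi>
    using \<phi> assms(1) by (simp add: group_hom_def group_hom_axioms_def iso_def is_group)
  obtain x where x: "x \<in> carrier G" "x \<otimes> x \<noteq> \<one>"
    using assms(3) by (auto simp: noninvolutions_def)
  have "inj_on \<phi> (carrier G)" using \<phi> by (simp add: iso_def bij_betw_def)
  then have "\<phi> (x \<otimes> x) \<noteq> \<phi> \<one>" using x by (meson inj_onD m_closed one_closed)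
  then have "\<phi> x \<otimes>\<^bsub>H\<^esub> \<phi> x \<noteq> \<one>\<^bsub>H\<^esub>" using x by simp
  moreover have "\<phi> x \<in> carrier H" using x by simp
  ultimately show ?thesis unfolding noninvolutions_def by blast
qed

end

locale generalized_dihedral = group G for G (structure) and A +
  assumes subgroup_A: "subgroup A G"
    and A_comm: "\<lbrakk>a \<in> A; b \<in> A\<rbrakk> \<Longrightarrow> a \<otimes> b = b \<otimes> a"
    and A_proper: "A \<noteq> carrier G"
    and outside_mult: "\<lbrakk>x \<in> carrier G; x \<notin> A; y \<in> carrier G; y \<notin> A\<rbrakk> \<Longrightarrow> x \<otimes> y \<in> A"
    and outside_inverts: "\<lbrakk>x \<in> carrier G; x \<notin> A; a \<in> A\<rbrakk> \<Longrightarrow> x \<otimes> a \<otimes> x = inv a"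

context generalized_dihedral
begin

lemma A_subset: "A \<subseteq> carrier G"
  using subgroup_A by (rule subgroup.subset)

lemma A_carrier: "a \<in> A \<Longrightarrow> a \<in> carrier G"
  using A_subset by blast

lemma inv_in_A: "a \<in> A \<Longrightarrow> inv a \<in> A"
  using subgroup_A by (rule subgroup.m_inv_closed)

lemma mult_in_A: "\<lbrakk>a \<in> A; b \<in> A\<rbrakk> \<Longrightarrow> a \<otimes> b \<in> A"
  using subgroup_A by (rule subgroup.m_closed)

lemma obtain_outside:
  obtains s where "s \<in> carrier G" "s \<notin> A"
  using A_subset A_proper by blast

lemma comm_group_A: "comm_group (G\<lparr>carrier := A\<rparr>)"
  using group.group_comm_groupI[OF subgroup_imp_group[OF subgroup_A]] A_comm by simp

lemma outside_square: "\<lbrakk>x \<in> carrier G; x \<notin> A\<rbrakk> \<Longrightarrow> x \<otimes> x = \<one>"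
  using outside_inverts[of x \<one>] subgroup.one_closed[OF subgroup_A] by simp

lemma outside_inv: "\<lbrakk>x \<in> carrier G; x \<notin> A\<rbrakk> \<Longrightarrow> inv x = x"
  using outside_square inv_equality by blast

lemma outside_commute:
  assumes "s \<in> carrier G" "s \<notin> A" "a \<in> A"
  shows "a \<otimes> s = s \<otimes> inv a"
proof -
  have a: "a \<in> carrier G" using assms(3) by (rule A_carrier)
  have "s \<otimes> inv a = s \<otimes> (s \<otimes> a \<otimes> s)" using outside_inverts[OF assms] by simp
  also have "\<dots> = (s \<otimes> s) \<otimes> a \<otimes> s" using assms(1) a by (simp add: m_assoc)
  also have "\<dots> = a \<otimes> s" using outside_square[OF assms(1,2)] a by simp
  finally show ?thesis by simp
qed

lemma mult_outside_left:
  assumes "s \<in> carrier G" "s \<notin> A" "a \<in> A" "b \<in> A"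
  shows "a \<otimes> (s \<otimes> b) = s \<otimes> (inv a \<otimes> b)"
proof -
  have "a \<otimes> (s \<otimes> b) = (a \<otimes> s) \<otimes> b"
    using assms A_carrier by (simp add: m_assoc)
  then show ?thesis
    using outside_commute[OF assms(1-3)] assms A_carrier by (simp add: m_assoc)
qed

lemma mult_outside_outside:
  assumes "s \<in> carrier G" "s \<notin> A" "a \<in> A" "b \<in> A"
  shows "(s \<otimes> a) \<otimes> (s \<otimes> b) = inv a \<otimes> b"
  using outside_inverts[OF assms(1-3)] assms A_carrier by (simp add: m_assoc [symmetric])

lemma outside_decompose:
  assumes "s \<in> carrier G" "s \<notin> A" "x \<in> carrier G" "x \<notin> A"
  shows "s \<otimes> x \<in> A" "x = s \<otimes> (s \<otimes> x)"
  using outside_mult[OF assms] outside_square[OF assms(1,2)] assms(1,3)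
  by (simp_all add: m_assoc [symmetric])

lemma normal_if_subset_A:
  assumes "subgroup N G" "N \<subseteq> A"
  shows "N \<lhd> G"
  unfolding normal_inv_iff
proof (intro conjI ballI)
  fix x h assume x: "x \<in> carrier G" and h: "h \<in> N"
  have hA: "h \<in> A" "h \<in> carrier G" using h assms(2) A_subset by auto
  show "x \<otimes> h \<otimes> inv x \<in> N"
  proof (cases "x \<in> A")
    case True
    then show ?thesis using A_comm[OF True hA(1)] x hA h by (simp add: m_assoc)
  next
    case False
    show ?thesis
      using outside_inverts[OF x False hA(1)] outside_inv[OF x False]
        subgroup.m_inv_closed[OF assms(1) h] by simp
  qed
qed (fact assms(1))

lemma hom_image_generalized_dihedral:
  assumes hom: "group_hom G Q f" and surj: "f ` carrier G = carrier Q"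
    and kernel: "kernel G Q f \<subseteq> A"
  shows "generalized_dihedral Q (f ` A)"
proof -
  interpret f: group_hom G Q f by (rule hom)
  have outside: "\<exists>x. x \<in> carrier G \<and> x \<notin> A \<and> p = f x" if "p \<in> carrier Q" "p \<notin> f ` A" for p
    using that surj by blast
  show ?thesis
  proof (intro generalized_dihedral.intro generalized_dihedral_axioms.intro)
    show "group Q" by (rule f.H.is_group)
    show "subgroup (f ` A) Q" by (rule f.subgroup_img_is_subgroup[OF subgroup_A])
  next
    fix p q assume "p \<in> f ` A" "q \<in> f ` A"
    then obtain a b where ab: "a \<in> A" "b \<in> A" "p = f a" "q = f b" by blast
    then have "f a \<otimes>\<^bsub>Q\<^esub> f b = f b \<otimes>\<^bsub>Q\<^esub> f a"
      using A_comm[OF ab(1,2)] A_carrier f.hom_mult by metis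
    then show "p \<otimes>\<^bsub>Q\<^esub> q = q \<otimes>\<^bsub>Q\<^esub> p" using ab by simp
  next
    obtain s where s: "s \<in> carrier G" "s \<notin> A" by (rule obtain_outside)
    then have "f s \<notin> f ` A" using mem_subgroup_containing_kernel[OF subgroup_A hom kernel] by blast
    moreover have "f s \<in> carrier Q" using s(1) by simp
    ultimately show "f ` A \<noteq> carrier Q" by blast
  next
    fix p q assume p: "p \<in> carrier Q" "p \<notin> f ` A" and q: "q \<in> carrier Q" "q \<notin> f ` A"
    obtain x where x: "x \<in> carrier G" "x \<notin> A" "p = f x" using outside[OF p] by blast
    obtain y where y: "y \<in> carrier G" "y \<notin> A" "q = f y" using outside[OF q] by blast
    have "f (x \<otimes> y) \<in> f ` A" using outside_mult[OF x(1,2) y(1,2)] by blast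
    then show "p \<otimes>\<^bsub>Q\<^esub> q \<in> f ` A" using x y by simp
  next
    fix p q assume p: "p \<in> carrier Q" "p \<notin> f ` A" and q: "q \<in> f ` A"
    obtain x where x: "x \<in> carrier G" "x \<notin> A" "p = f x" using outside[OF p] by blast
    obtain a where a: "a \<in> A" "q = f a" using q by blast
    have "f (x \<otimes> a \<otimes> x) = f (inv a)" using outside_inverts[OF x(1,2) a(1)] by simp
    then show "p \<otimes>\<^bsub>Q\<^esub> q \<otimes>\<^bsub>Q\<^esub> p = inv\<^bsub>Q\<^esub> q" using x a A_carrier by simp
  qed
qed

lemma Mod_generalized_dihedral:
  assumes "N \<lhd> G" "N \<subseteq> A"
  shows "generalized_dihedral (G Mod N) ((#>) N ` A)"
proof (rule hom_image_generalized_dihedral)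
  interpret N: normal N G by (rule assms(1))
  show "group_hom G (G Mod N) ((#>) N)"
    using N.r_coset_hom_Mod N.factorgroup_is_group by (simp add: group_hom_def group_hom_axioms_def is_group)
  show "(#>) N ` carrier G = carrier (G Mod N)" by (simp add: carrier_FactGroup)
  show "kernel G (G Mod N) ((#>) N) \<subseteq> A"
    using assms(2) coset_join1[OF _ _ N.subgroup_axioms] by (auto simp: kernel_def)
qed

lemma subgroup_generalized_dihedral:
  assumes K: "subgroup K G" and not_sub: "\<not> K \<subseteq> A"
  shows "generalized_dihedral (G\<lparr>carrier := K\<rparr>) (K \<inter> A)"
proof -
  interpret K: group "G\<lparr>carrier := K\<rparr>" by (rule subgroup_imp_group[OF K])
  have K_carrier: "K \<subseteq> carrier G" using K by (rule subgroup.subset)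
  show ?thesis
  proof (intro generalized_dihedral.intro generalized_dihedral_axioms.intro)
    show "group (G\<lparr>carrier := K\<rparr>)" by (rule K.is_group)
    show "subgroup (K \<inter> A) (G\<lparr>carrier := K\<rparr>)"
      using subgroup_incl[OF subgroup_Int[OF K subgroup_A] K] by blast
  next
    fix a b assume "a \<in> K \<inter> A" "b \<in> K \<inter> A"
    then show "a \<otimes>\<^bsub>G\<lparr>carrier := K\<rparr>\<^esub> b = b \<otimes>\<^bsub>G\<lparr>carrier := K\<rparr>\<^esub> a"
      using A_comm by simp
  next
    show "K \<inter> A \<noteq> carrier (G\<lparr>carrier := K\<rparr>)" using not_sub by auto
  next
    fix x y assume "x \<in> carrier (G\<lparr>carrier := K\<rparr>)" "x \<notin> K \<inter> A"
      "y \<in> carrier (G\<lparr>carrier := K\<rparr>)" "y \<notin> K \<inter> A"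
    then show "x \<otimes>\<^bsub>G\<lparr>carrier := K\<rparr>\<^esub> y \<in> K \<inter> A"
      using outside_mult K_carrier subgroup.m_closed[OF K] by auto
  next
    fix x a assume "x \<in> carrier (G\<lparr>carrier := K\<rparr>)" "x \<notin> K \<inter> A" "a \<in> K \<inter> A"
    then show "x \<otimes>\<^bsub>G\<lparr>carrier := K\<rparr>\<^esub> a \<otimes>\<^bsub>G\<lparr>carrier := K\<rparr>\<^esub> x
        = inv\<^bsub>G\<lparr>carrier := K\<rparr>\<^esub> a"
      using outside_inverts[of x a] K_carrier by (auto simp: m_inv_consistent[OF K])
  qed
qed

lemma subgroup_extend:
  assumes H: "subgroup H G" "H \<subseteq> A" and t: "t \<in> carrier G" "t \<notin> A"
  shows "subgroup (H \<union> (\<otimes>) t ` H) G"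
proof -
  let ?K = "H \<union> (\<otimes>) t ` H"
  have H_A: "h \<in> A" if "h \<in> H" for h using that H(2) by blast
  have t_outside: "t \<otimes> h \<notin> A" if "h \<in> H" for h
    using subgroup_mult_right_iff[OF subgroup_A H_A[OF that] t(1)] t(2) by blast
  have closed: "h \<otimes> k \<in> H" "inv h \<otimes> k \<in> H" if "h \<in> H" "k \<in> H" for h k
    using that subgroup.m_closed[OF H(1)] subgroup.m_inv_closed[OF H(1)] by auto
  have products: "h \<otimes> (t \<otimes> k) \<in> ?K" "(t \<otimes> h) \<otimes> k \<in> ?K" "(t \<otimes> h) \<otimes> (t \<otimes> k) \<in> ?K"
    if "h \<in> H" "k \<in> H" for h k
    using mult_outside_left[OF t H_A H_A] mult_outside_outside[OF t H_A H_A] closed that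
      t(1) H_A A_carrier by (auto simp: m_assoc)
  show ?thesis
  proof (rule subgroupI)
    show "?K \<subseteq> carrier G" using H_A A_carrier t(1) by auto
    show "?K \<noteq> {}" using subgroup.one_closed[OF H(1)] by blast
  next
    fix x assume "x \<in> ?K"
    then show "inv x \<in> ?K"
      using subgroup.m_inv_closed[OF H(1)] outside_inv t_outside t(1) H_A A_carrier by auto
  next
    fix x y assume "x \<in> ?K" "y \<in> ?K"
    then obtain h k where h: "h \<in> H" "x = h \<or> x = t \<otimes> h" and k: "k \<in> H" "y = k \<or> y = t \<otimes> k"
      by blast
    then show "x \<otimes> y \<in> ?K" using closed[OF h(1) k(1)] products[OF h(1) k(1)] by auto
  qed
qed

lemma abelian_image_square_one:
  assumes H: "subgroup H G" "\<not> H \<subseteq> A" and f: "f \<in> hom (G\<lparr>carrier := H\<rparr>) P"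
    and P: "comm_group P" and h: "h \<in> H"
  shows "f h \<otimes>\<^bsub>P\<^esub> f h = \<one>\<^bsub>P\<^esub>"
proof -
  interpret P: comm_group P by (rule P)
  interpret GH: group "G\<lparr>carrier := H\<rparr>" by (rule subgroup_imp_group[OF H(1)])
  have H_carrier: "H \<subseteq> carrier G" using H(1) by (rule subgroup.subset)
  have f_mult: "f (x \<otimes> y) = f x \<otimes>\<^bsub>P\<^esub> f y" if "x \<in> H" "y \<in> H" for x y
    using hom_mult[OF f] that by simp
  have f_closed: "f x \<in> carrier P" if "x \<in> H" for x
    using hom_in_carrier[OF f] that by simp
  have square_outside: "f x \<otimes>\<^bsub>P\<^esub> f x = \<one>\<^bsub>P\<^esub>" if "x \<in> H" "x \<notin> A" for x
    using f_mult[OF that(1) that(1)] outside_square[of x] that H_carrier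
      hom_one[OF f GH.is_group P.is_group] by auto
  obtain h0 where h0: "h0 \<in> H" "h0 \<notin> A" using H(2) by blast
  show ?thesis
  proof (cases "h \<in> A")
    case True
    have "h0 \<otimes> h \<notin> A"
      using subgroup_mult_right_iff[OF subgroup_A True] h0 H_carrier by blast
    then have "(f h0 \<otimes>\<^bsub>P\<^esub> f h0) \<otimes>\<^bsub>P\<^esub> (f h \<otimes>\<^bsub>P\<^esub> f h) = \<one>\<^bsub>P\<^esub>"
      using square_outside[of "h0 \<otimes> h"] subgroup.m_closed[OF H(1) h0(1) h]
      by (simp add: f_mult h0(1) h f_closed P.m_ac)
    then show ?thesis using square_outside[OF h0] f_closed h by simp
  qed (use square_outside h in blast)
qed

lemma abelian_section_subset_A:
  assumes H: "subgroup H G" and N: "N \<lhd> G\<lparr>carrier := H\<rparr>"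
    and comm: "comm_group (G\<lparr>carrier := H\<rparr> Mod N)"
    and noninvolution: "noninvolutions (G\<lparr>carrier := H\<rparr> Mod N) \<noteq> {}"
  shows "H \<subseteq> A"
proof (rule ccontr)
  assume not_sub: "\<not> H \<subseteq> A"
  interpret N: normal N "G\<lparr>carrier := H\<rparr>" by (rule N)
  obtain h where "h \<in> H" "(N #>\<^bsub>G\<lparr>carrier := H\<rparr>\<^esub> h) \<otimes>\<^bsub>G\<lparr>carrier := H\<rparr> Mod N\<^esub> (N #>\<^bsub>G\<lparr>carrier := H\<rparr>\<^esub> h)
      \<noteq> \<one>\<^bsub>G\<lparr>carrier := H\<rparr> Mod N\<^esub>"
    using noninvolution by (auto simp: noninvolutions_def carrier_FactGroup)
  then show False
    using abelian_image_square_one[OF H not_sub N.r_coset_hom_Mod comm] by simp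
qed

end

locale sq_cond_group = group G for G (structure) +
  assumes sq_cond: "sq_cond G"
begin

lemma noninvolutions_commute:
  "\<lbrakk>x \<in> noninvolutions G; y \<in> noninvolutions G\<rbrakk> \<Longrightarrow> x \<otimes> y = y \<otimes> x"
  using sq_cond by (auto simp: sq_cond_def noninvolutions_def)

lemma noninvolutions_subset_centralizer:
  "noninvolutions G \<subseteq> centralizer G (noninvolutions G)"
  using noninvolutions_commute by (auto simp: centralizer_def noninvolutions_def)

lemma square_outside_centralizer:
  assumes "x \<in> carrier G" "x \<notin> centralizer G (noninvolutions G)"
  shows "x \<otimes> x = \<one>"
  using assms sq_cond by (auto simp: sq_cond_def centralizer_def noninvolutions_def)

lemma noninvolutions_nonempty:
  assumes "\<not> comm_group G"
  shows "noninvolutions G \<noteq> {}"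
  using assms comm_group_if_squares_one by (auto simp: noninvolutions_def)

lemma centralizer_comm:
  assumes a: "a \<in> centralizer G (noninvolutions G)" and b: "b \<in> centralizer G (noninvolutions G)"
  shows "a \<otimes> b = b \<otimes> a"
proof (cases "comm_group G")
  case True
  then interpret comm_group G .
  show ?thesis using a b by (simp add: centralizer_def m_comm)
next
  case False
  have ab: "a \<in> carrier G" "b \<in> carrier G" using a b by (auto simp: centralizer_def)
  show ?thesis
  proof (cases "a \<in> noninvolutions G")
    case True
    then show ?thesis using b by (auto simp: centralizer_def)
  next
    case a_square: False
    obtain z where z: "z \<in> noninvolutions G" using noninvolutions_nonempty[OF False] by blast
    have z_carrier: "z \<in> carrier G" using z by (simp add: noninvolutions_def)
    have az: "a \<otimes> z = z \<otimes> a" using a z by (simp add: centralizer_def)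
    have "(a \<otimes> z) \<otimes> (a \<otimes> z) = a \<otimes> (z \<otimes> a) \<otimes> z"
      using ab z_carrier by (simp add: m_assoc)
    also have "\<dots> = a \<otimes> (a \<otimes> z) \<otimes> z" using az by simp
    also have "\<dots> = (a \<otimes> a) \<otimes> (z \<otimes> z)" using ab z_carrier by (simp add: m_assoc)
    finally have "(a \<otimes> z) \<otimes> (a \<otimes> z) = (a \<otimes> a) \<otimes> (z \<otimes> z)" .
    then have "a \<otimes> z \<in> noninvolutions G"
      using a_square z ab z_carrier by (simp add: noninvolutions_def)
    then have "b \<otimes> (a \<otimes> z) = (a \<otimes> z) \<otimes> b" and "b \<otimes> z = z \<otimes> b"
      using b z by (auto simp: centralizer_def)
    then have "(b \<otimes> a) \<otimes> z = (a \<otimes> b) \<otimes> z"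
      using ab z_carrier by (simp add: m_assoc)
    then show ?thesis using ab z_carrier by simp
  qed
qed

lemma subgroup_centralizer_noninvolutions: "subgroup (centralizer G (noninvolutions G)) G"
  by (rule subgroup_centralizer) (auto simp: noninvolutions_def)

lemma outside_centralizer_commute:
  assumes x: "x \<in> carrier G" "x \<notin> centralizer G (noninvolutions G)"
    and a: "a \<in> centralizer G (noninvolutions G)"
  shows "x \<otimes> a = inv a \<otimes> x"
proof -
  let ?C = "centralizer G (noninvolutions G)"
  have inv_outside: "inv y = y" if "y \<in> carrier G" "y \<notin> ?C" for y
    using square_outside_centralizer[OF that] that inv_equality by blast
  have a_carrier: "a \<in> carrier G"
    using subgroup.mem_carrier[OF subgroup_centralizer_noninvolutions a] .
  have "x \<otimes> a \<notin> ?C"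
    using subgroup_mult_right_iff[OF subgroup_centralizer_noninvolutions a x(1)] x(2) by blast
  then have "x \<otimes> a = inv (x \<otimes> a)" using inv_outside x a_carrier by simp
  also have "\<dots> = inv a \<otimes> x" using inv_outside[OF x] x a_carrier by (simp add: inv_mult_group)
  finally show ?thesis .
qed

lemma generalized_dihedral_centralizer:
  assumes "\<not> comm_group G"
  shows "generalized_dihedral G (centralizer G (noninvolutions G))"
proof -
  let ?C = "centralizer G (noninvolutions G)"
  show ?thesis
  proof (intro generalized_dihedral.intro generalized_dihedral_axioms.intro is_group)
    show "subgroup ?C G" by (rule subgroup_centralizer_noninvolutions)
    show "a \<otimes> b = b \<otimes> a" if "a \<in> ?C" "b \<in> ?C" for a b
      using that by (rule centralizer_comm)
    show "?C \<noteq> carrier G"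
    proof
      assume "?C = carrier G"
      then have "comm_group G" using centralizer_comm by (intro group_comm_groupI) auto
      with assms show False by blast
    qed
  next
    fix x a assume x: "x \<in> carrier G" "x \<notin> ?C" and a: "a \<in> ?C"
    have a_carrier: "a \<in> carrier G" using subgroup.mem_carrier[OF subgroup_centralizer_noninvolutions a] .
    show "x \<otimes> a \<otimes> x = inv a"
      using outside_centralizer_commute[OF x a] square_outside_centralizer[OF x] x a_carrier by (simp add: m_assoc)
  next
    fix x y assume x: "x \<in> carrier G" "x \<notin> ?C" and y: "y \<in> carrier G" "y \<notin> ?C"
    have "(x \<otimes> y) \<otimes> z = z \<otimes> (x \<otimes> y)" if z: "z \<in> noninvolutions G" for z
    proof -
      have zC: "z \<in> ?C" "inv z \<in> ?C"
        using z noninvolutions_subset_centralizer subgroup.m_inv_closed[OF subgroup_centralizer_noninvolutions] by auto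
      have z_carrier: "z \<in> carrier G" using z by (simp add: noninvolutions_def)
      have "(x \<otimes> y) \<otimes> z = x \<otimes> (inv z \<otimes> y)"
        using outside_centralizer_commute[OF y zC(1)] x y z_carrier by (simp add: m_assoc)
      also have "\<dots> = z \<otimes> (x \<otimes> y)"
        using outside_centralizer_commute[OF x zC(2)] x y z_carrier by (simp flip: m_assoc)
      finally show ?thesis .
    qed
    then show "x \<otimes> y \<in> ?C" using x y by (simp add: centralizer_def)
  qed
qed

end

locale dihedral_extension =
  G: generalized_dihedral G A + Q: generalized_dihedral Q B
  for G (structure) and A and Q (structure) and B +
  fixes \<phi> s F
  assumes \<phi>_iso: "\<phi> \<in> iso (G\<lparr>carrier := A\<rparr>) (Q\<lparr>carrier := B\<rparr>)"
    and s: "s \<in> carrier G" "s \<notin> A"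
    and F: "F \<in> carrier Q" "F \<notin> B"
begin

definition extend :: "'a \<Rightarrow> 'c" where
  "extend x = (if x \<in> A then \<phi> x else F \<otimes>\<^bsub>Q\<^esub> \<phi> (s \<otimes> x))"

lemma \<phi>_group_hom: "group_hom (G\<lparr>carrier := A\<rparr>) (Q\<lparr>carrier := B\<rparr>) \<phi>"
  using \<phi>_iso G.subgroup_imp_group[OF G.subgroup_A] Q.subgroup_imp_group[OF Q.subgroup_A]
  by (simp add: group_hom_def group_hom_axioms_def iso_def)

lemma \<phi>_closed: "a \<in> A \<Longrightarrow> \<phi> a \<in> B"
  using \<phi>_iso by (auto simp: iso_def bij_betw_def)

lemma \<phi>_mult: "\<lbrakk>a \<in> A; b \<in> A\<rbrakk> \<Longrightarrow> \<phi> (a \<otimes> b) = \<phi> a \<otimes>\<^bsub>Q\<^esub> \<phi> b"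
  using group_hom.hom_mult[OF \<phi>_group_hom] by simp

lemma \<phi>_inv: "a \<in> A \<Longrightarrow> \<phi> (inv a) = inv\<^bsub>Q\<^esub> \<phi> a"
  using group_hom.hom_inv[OF \<phi>_group_hom, of a] \<phi>_closed
  by (simp add: G.m_inv_consistent[OF G.subgroup_A] Q.m_inv_consistent[OF Q.subgroup_A])

lemma extend_A: "a \<in> A \<Longrightarrow> extend a = \<phi> a"
  by (simp add: extend_def)

lemma extend_outside: "a \<in> A \<Longrightarrow> extend (s \<otimes> a) = F \<otimes>\<^bsub>Q\<^esub> \<phi> a"
  using G.subgroup_mult_right_iff[OF G.subgroup_A, of a s] G.outside_square[OF s] s G.A_carrier
  by (simp add: extend_def G.m_assoc [symmetric])

lemma carrier_cases:
  assumes "x \<in> carrier G"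
  obtains (A) "x \<in> A" | (outside) a where "a \<in> A" "x = s \<otimes> a"
  using G.outside_decompose[OF s assms] by blast

lemma extend_closed:
  assumes "x \<in> carrier G"
  shows "extend x \<in> carrier Q"
  using assms by (cases rule: carrier_cases)
    (auto simp: extend_A extend_outside \<phi>_closed F Q.A_carrier)

lemma extend_mult:
  assumes x: "x \<in> carrier G" and y: "y \<in> carrier G"
  shows "extend (x \<otimes> y) = extend x \<otimes>\<^bsub>Q\<^esub> extend y"
  using x
proof (cases rule: carrier_cases)
  case A
  from y show ?thesis
  proof (cases rule: carrier_cases)
    case A': A
    then show ?thesis using A by (simp add: G.mult_in_A extend_A \<phi>_mult)
  next
    case (outside b)
    then show ?thesis using A
      by (simp add: G.mult_outside_left[OF s] Q.mult_outside_left[OF F] extend_A extend_outside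
          G.mult_in_A G.inv_in_A \<phi>_mult \<phi>_inv \<phi>_closed)
  qed
next
  case (outside a)
  from y show ?thesis
  proof (cases rule: carrier_cases)
    case A
    then show ?thesis using outside s F G.A_carrier Q.A_carrier
      by (simp add: G.m_assoc Q.m_assoc G.mult_in_A extend_A extend_outside \<phi>_mult \<phi>_closed)
  next
    case outside': (outside b)
    then show ?thesis using outside
      by (simp add: G.mult_outside_outside[OF s] Q.mult_outside_outside[OF F] extend_A extend_outside
          G.mult_in_A G.inv_in_A \<phi>_mult \<phi>_inv \<phi>_closed)
  qed
qed

lemma extend_kernel: "kernel G Q extend = {\<one>}"
proof -
  have \<phi>_inj: "inj_on \<phi> A" using \<phi>_iso by (simp add: iso_def bij_betw_def)
  have \<phi>_one: "\<phi> \<one> = \<one>\<^bsub>Q\<^esub>" using group_hom.hom_one[OF \<phi>_group_hom] by simp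
  have "x = \<one>" if x: "x \<in> carrier G" and one: "extend x = \<one>\<^bsub>Q\<^esub>" for x
    using x
  proof (cases rule: carrier_cases)
    case A
    then show ?thesis
      using one \<phi>_one \<phi>_inj G.subgroup_A Q.subgroup_A
      by (simp add: extend_A inj_on_def subgroup.one_closed)
  next
    case (outside a)
    then have "F \<otimes>\<^bsub>Q\<^esub> \<phi> a \<notin> B"
      using Q.subgroup_mult_right_iff[OF Q.subgroup_A \<phi>_closed F(1)] F(2) by blast
    then show ?thesis using one outside subgroup.one_closed[OF Q.subgroup_A]
      by (simp add: extend_outside)
  qed
  then show ?thesis using extend_A \<phi>_one G.subgroup_A
    by (auto simp: kernel_def subgroup.one_closed)
qed

lemma extend_surj: "extend ` carrier G = carrier Q"
proof
  show "extend ` carrier G \<subseteq> carrier Q" using extend_closed by blast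
  have \<phi>_surj: "\<phi> ` A = B" using \<phi>_iso by (simp add: iso_def bij_betw_def)
  show "carrier Q \<subseteq> extend ` carrier G"
  proof
    fix q assume q: "q \<in> carrier Q"
    show "q \<in> extend ` carrier G"
    proof (cases "q \<in> B")
      case True
      then obtain a where "a \<in> A" "q = \<phi> a" using \<phi>_surj by blast
      then show ?thesis using G.A_carrier extend_A by (metis image_eqI)
    next
      case False
      obtain a where a: "a \<in> A" "F \<otimes>\<^bsub>Q\<^esub> q = \<phi> a"
        using Q.outside_decompose(1)[OF F q False] \<phi>_surj by blast
      then have "q = extend (s \<otimes> a)"
        using Q.outside_decompose(2)[OF F q False] extend_outside by simp
      then show ?thesis using a(1) s G.A_carrier by blast
    qed
  qed
qed

lemma extend_iso: "extend \<in> iso G Q"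
  using extend_closed extend_mult extend_kernel extend_surj
  by (simp add: iso_kernel_image[OF G.is_group Q.is_group] hom_def)

end

lemma generalized_dihedral_iso:
  assumes G: "generalized_dihedral G A" and Q: "generalized_dihedral Q B"
    and iso: "G\<lparr>carrier := A\<rparr> \<cong> Q\<lparr>carrier := B\<rparr>"
  shows "G \<cong> Q"
proof -
  obtain \<phi> where \<phi>: "\<phi> \<in> iso (G\<lparr>carrier := A\<rparr>) (Q\<lparr>carrier := B\<rparr>)"
    using iso by (auto simp: is_iso_def)
  obtain s where s: "s \<in> carrier G" "s \<notin> A" using generalized_dihedral.obtain_outside[OF G] .
  obtain F where F: "F \<in> carrier Q" "F \<notin> B" using generalized_dihedral.obtain_outside[OF Q] .
  interpret dihedral_extension G A Q B \<phi> s F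
    by (intro dihedral_extension.intro dihedral_extension_axioms.intro G Q \<phi> s F)
  show ?thesis using extend_iso by (auto simp: is_iso_def)
qed

lemma iso_to_section_of_iso:
  assumes "S \<cong> T" "iso_to_section T G"
  shows "iso_to_section S G"
  using assms iso_trans unfolding iso_to_section_def by blast

lemma (in group) iso_Mod_trivial: "G \<cong> G Mod {\<one>}"
  using group.iso_sym[OF normal.factorgroup_is_group[OF one_is_normal] is_isoI[OF trivial_factor_iso]] .

lemma Mod_carrier_update:
  "(G\<lparr>carrier := K\<rparr> Mod N)\<lparr>carrier := (#>\<^bsub>G\<^esub>) N ` H\<rparr> = G\<lparr>carrier := H\<rparr> Mod N"
proof -
  have "set_mult (G\<lparr>carrier := K\<rparr>) = set_mult (G\<lparr>carrier := H\<rparr>)" by (intro ext) simp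
  then show ?thesis by (simp add: FactGroup_def RCOSETS_def UNION_singleton_eq_range)
qed

lemma abelian_subgroup_iso_to_section:
  assumes K: "subgroup K G2" and comm: "comm_group (G2\<lparr>carrier := K\<rparr>)"
    and abelian_sections: "\<forall>H N. subgroup H G2 \<and> normal N (G2\<lparr>carrier := H\<rparr>)
              \<and> comm_group ((G2\<lparr>carrier := H\<rparr>) Mod N)
              \<longrightarrow> iso_to_section ((G2\<lparr>carrier := H\<rparr>) Mod N) G1"
  shows "iso_to_section (G2\<lparr>carrier := K\<rparr>) G1"
proof -
  interpret K: comm_group "G2\<lparr>carrier := K\<rparr>" by (rule comm)
  have "iso_to_section (G2\<lparr>carrier := K\<rparr> Mod {\<one>\<^bsub>G2\<lparr>carrier := K\<rparr>\<^esub>}) G1"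
    using abelian_sections K K.one_is_normal K.abelian_FactGroup[OF K.triv_subgroup] by blast
  then show ?thesis using K.iso_Mod_trivial by (rule iso_to_section_of_iso[rotated])
qed

lemma generalized_dihedral_iso_to_section:
  assumes G: "generalized_dihedral G A" and Q: "generalized_dihedral Q B"
    and H: "subgroup H G" "H \<subseteq> A" and N: "N \<lhd> G\<lparr>carrier := H\<rparr>"
    and iso: "Q\<lparr>carrier := B\<rparr> \<cong> G\<lparr>carrier := H\<rparr> Mod N"
  shows "iso_to_section Q G"
proof -
  interpret G: generalized_dihedral G A by (rule G)
  obtain t where t: "t \<in> carrier G" "t \<notin> A" by (rule G.obtain_outside)
  define K where "K = H \<union> (\<otimes>\<^bsub>G\<^esub>) t ` H"
  have K: "subgroup K G" unfolding K_def by (rule G.subgroup_extend[OF H t])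
  have t_H_outside: "t \<otimes>\<^bsub>G\<^esub> h \<notin> A" if "h \<in> H" for h
    using G.subgroup_mult_right_iff[OF G.subgroup_A _ t(1)] H(2) that t(2) by blast
  have "K \<inter> A = H" and "\<not> K \<subseteq> A"
    using H(2) t_H_outside subgroup.one_closed[OF H(1)] unfolding K_def by auto
  then interpret GK: generalized_dihedral "G\<lparr>carrier := K\<rparr>" H
    using G.subgroup_generalized_dihedral[OF K] by simp
  have N_H: "subgroup N (G\<lparr>carrier := H\<rparr>)" using N by (rule normal_imp_subgroup)
  then have N_subset: "N \<subseteq> H" using subgroup.subset by force
  have "subgroup N G" using G.incl_subgroup[OF H(1) N_H] .
  then have "subgroup N (G\<lparr>carrier := K\<rparr>)"
    using G.subgroup_incl[OF _ K] N_subset unfolding K_def by blast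
  then have N_K: "N \<lhd> G\<lparr>carrier := K\<rparr>" using GK.normal_if_subset_A N_subset by blast
  have "Q \<cong> G\<lparr>carrier := K\<rparr> Mod N"
    using generalized_dihedral_iso[OF Q GK.Mod_generalized_dihedral[OF N_K N_subset]] iso
    by (simp add: Mod_carrier_update)
  then show ?thesis unfolding iso_to_section_def using K N_K by blast
qed

theorem lemma6:
  fixes G1 :: "('a, 'c) monoid_scheme" and G2 :: "('b, 'd) monoid_scheme"
  assumes "group G1" and "group G2"
    and "finite (carrier G1)" and "finite (carrier G2)"
    and "sq_cond G1" and "sq_cond G2"
    and "\<forall>H N. subgroup H G2 \<and> normal N (G2\<lparr>carrier := H\<rparr>)
              \<and> comm_group ((G2\<lparr>carrier := H\<rparr>) Mod N)
              \<longrightarrow> iso_to_section ((G2\<lparr>carrier := H\<rparr>) Mod N) G1"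
    and "\<not> comm_group G1"
  shows "iso_to_section G2 G1"
proof (cases "comm_group G2")
  case True
  then show ?thesis
    using abelian_subgroup_iso_to_section[OF group.subgroup_self[OF assms(2)] _ assms(7)]
    by simp
next
  case False
  interpret G1: sq_cond_group G1
    using assms(1,5) by (simp add: sq_cond_group_def sq_cond_group_axioms_def)
  interpret G2: sq_cond_group G2
    using assms(2,6) by (simp add: sq_cond_group_def sq_cond_group_axioms_def)
  let ?A1 = "centralizer G1 (noninvolutions G1)" and ?A2 = "centralizer G2 (noninvolutions G2)"
  have dih1: "generalized_dihedral G1 ?A1" by (rule G1.generalized_dihedral_centralizer[OF assms(8)])
  have dih2: "generalized_dihedral G2 ?A2" by (rule G2.generalized_dihedral_centralizer[OF False])
  have noninvolution: "noninvolutions (G2\<lparr>carrier := ?A2\<rparr>) \<noteq> {}"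
    using G2.noninvolutions_nonempty[OF False] G2.noninvolutions_subset_centralizer
    by (auto simp: noninvolutions_def)
  obtain H N where H: "subgroup H G1" and N: "N \<lhd> G1\<lparr>carrier := H\<rparr>"
    and iso: "G2\<lparr>carrier := ?A2\<rparr> \<cong> G1\<lparr>carrier := H\<rparr> Mod N"
    using abelian_subgroup_iso_to_section[OF generalized_dihedral.subgroup_A[OF dih2]
        generalized_dihedral.comm_group_A[OF dih2] assms(7)]
    unfolding iso_to_section_def by blast
  interpret A2: comm_group "G2\<lparr>carrier := ?A2\<rparr>" by (rule generalized_dihedral.comm_group_A[OF dih2])
  have quotient_group: "group (G1\<lparr>carrier := H\<rparr> Mod N)" by (rule normal.factorgroup_is_group[OF N])
  have "H \<subseteq> ?A1"
    using generalized_dihedral.abelian_section_subset_A[OF dih1 H N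
        A2.iso_imp_comm_group[OF iso group.is_monoid[OF quotient_group]]
        A2.noninvolutions_iso[OF quotient_group iso noninvolution]] .
  then show ?thesis by (rule generalized_dihedral_iso_to_section[OF dih1 dih2 H _ N iso])
qed

end
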